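(* For all $\alpha>1$ and all real numbers $0<a<b$, \[ \frac{(b+1)^\alpha-a^\alpha}{b^\alpha-a^\alpha}\ge\frac{(b+1)^{\alpha-1}-a^{\alpha-1}}{b^{\alpha-1}-a^{\alpha-1}}. \] *)

theory Defs
  imports Complex_Main
begin

end

theory Submission
  imports Defs "HOL-Analysis.Analysis"
begin

text \<open>Substituting \<open>x = t powr p\<close> turns \<open>t powr r\<close> into \<open>x powr (r / p)\<close>, a convex function
  of \<open>x\<close> when \<open>p \<le> r\<close>. For a convex \<open>f\<close> the chord slopes from a fixed left endpoint increase,
  so the increments of \<open>f\<close> grow at least proportionally to the increments of its argument.\<close>

lemma convex_on_increment_ratio_le:
  fixes f :: "real \<Rightarrow> real"
  assumes "convex_on I f" and "x \<in> I" and "z \<in> I" and "x < y" and "y < z" and "f x < f y"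
  shows "(z - x) / (y - x) \<le> (f z - f x) / (f y - f x)"
proof -
  have "(f x - f y) / (x - y) \<le> (f x - f z) / (x - z)"
    using convex_on_slope_le(1)[OF assms(1-5)] .
  then have "(f y - f x) / (y - x) \<le> (f z - f x) / (z - x)"
    by (metis minus_diff_eq minus_divide_divide)
  then have "(f y - f x) * (z - x) \<le> (f z - f x) * (y - x)"
    using assms(4,5) by (simp add: divide_simps)
  then show ?thesis
    using assms(4,6) by (simp add: divide_simps mult.commute)
qed

lemma powr_increment_ratio_mono:
  fixes p r a b c :: real
  assumes "0 < p" and "p \<le> r" and "0 < a" and "a < b" and "b < c"
  shows "(c powr p - a powr p) / (b powr p - a powr p)
         \<le> (c powr r - a powr r) / (b powr r - a powr r)"
proof -
  define f where "f = (\<lambda>x::real. x powr (r / p))"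
  have convex: "convex_on {0<..} f"
    unfolding f_def using assms(1,2) by (intro powr_convex) simp
  have f_powr: "f (t powr p) = t powr r" if "0 < t" for t
    using that assms(1) by (simp add: f_def powr_powr)
  have "a powr p < b powr p" "b powr p < c powr p" "a powr r < b powr r"
    using assms by (auto intro: powr_less_mono2)
  then have "(c powr p - a powr p) / (b powr p - a powr p)
        \<le> (f (c powr p) - f (a powr p)) / (f (b powr p) - f (a powr p))"
    using assms by (intro convex_on_increment_ratio_le[OF convex]) (simp_all add: f_powr)
  then show ?thesis
    using assms by (simp add: f_powr)
qed

theorem lemma2:
  fixes \<alpha> a b :: real
  assumes "\<alpha> > 1" and "0 < a" and "a < b"
  shows "((b + 1) powr \<alpha> - a powr \<alpha>) / (b powr \<alpha> - a powr \<alpha>)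
         \<ge> ((b + 1) powr (\<alpha> - 1) - a powr (\<alpha> - 1)) / (b powr (\<alpha> - 1) - a powr (\<alpha> - 1))"
  using powr_increment_ratio_mono[of "\<alpha> - 1" \<alpha> a b "b + 1"] assms by simp

end
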